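(* Let $(X,Y)$ be a pair of racks which is productive and synchronized. Then the natural group homomorphism $\Gamma_{X\times Y}\to\Gamma_X\times\Gamma_Y\times\Gamma_{X_{\mathrm{triv}}\times Y_{\mathrm{triv}}}$ is injective.
   Context: A rack is a set $X$ with an operation $x^y$ such that $x\mapsto x^y$ is bijective for each $y$ and $(z^x)^y=(z^y)^{x^y}$. The product rack has $(x,a)^{(y,b)}=(x^y,a^b)$. The structure group is $\Gamma_X=\langle X\mid y^{-1}xy=x^y\rangle$, functorial; $\Gamma'$ denotes commutator subgroup. $X_{\mathrm{triv}}$ is the set of connected components of $X$ (classes of the smallest equivalence relation with $x\sim x^y$), regarded as a trivial rack ($a^b=a$), with the quotient map $X\to X_{\mathrm{triv}}$ a rack morphism; $\Gamma$ of a trivial rack is the free abelian group on it. The pair $(X,Y)$ is productive if the homomorphism $\Gamma'_{X\times Y}\to\Gamma'_X\times\Gamma'_Y$ induced by $\Gamma_{X\times Y}\to\Gamma_X\times\Gamma_Y$ is injective, and synchronized if the natural surjection $(X\times Y)_{\mathrm{triv}}\to X_{\mathrm{triv}}\times Y_{\mathrm{triv}}$ is a bijection. The map to $\Gamma_{X_{\mathrm{triv}}\times Y_{\mathrm{triv}}}$ is induced by $(x,y)\mapsto$(component of $x$, component of $y$). *)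

theory Defs
  imports "HOL-Algebra.Generated_Groups"
begin

text \<open>A rack is a carrier set X with a binary operation opr, where opr x y stands for x^y.\<close>

definition rack :: "'a set \<Rightarrow> ('a \<Rightarrow> 'a \<Rightarrow> 'a) \<Rightarrow> bool" where
  "rack X opr \<longleftrightarrow>
     (\<forall>x\<in>X. \<forall>y\<in>X. opr x y \<in> X) \<and>
     (\<forall>y\<in>X. bij_betw (\<lambda>x. opr x y) X X) \<and>
     (\<forall>x\<in>X. \<forall>y\<in>X. \<forall>z\<in>X. opr (opr z x) y = opr (opr z y) (opr x y))"

definition prod_op :: "('a \<Rightarrow> 'a \<Rightarrow> 'a) \<Rightarrow> ('b \<Rightarrow> 'b \<Rightarrow> 'b) \<Rightarrow> ('a \<times> 'b) \<Rightarrow> ('a \<times> 'b) \<Rightarrow> 'a \<times> 'b" where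
  "prod_op opX opY p q = (opX (fst p) (fst q), opY (snd p) (snd q))"

inductive_set conn :: "'a set \<Rightarrow> ('a \<Rightarrow> 'a \<Rightarrow> 'a) \<Rightarrow> ('a \<times> 'a) set"
  for X opr where
  conn_refl: "x \<in> X \<Longrightarrow> (x, x) \<in> conn X opr"
| conn_step: "x \<in> X \<Longrightarrow> y \<in> X \<Longrightarrow> (x, opr x y) \<in> conn X opr"
| conn_sym: "(x, y) \<in> conn X opr \<Longrightarrow> (y, x) \<in> conn X opr"
| conn_trans: "(x, y) \<in> conn X opr \<Longrightarrow> (y, z) \<in> conn X opr \<Longrightarrow> (x, z) \<in> conn X opr"

text \<open>X_triv as a set: the set of connected components.\<close>
definition triv_set :: "'a set \<Rightarrow> ('a \<Rightarrow> 'a \<Rightarrow> 'a) \<Rightarrow> 'a set set" where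
  "triv_set X opr = X // conn X opr"

definition component :: "'a set \<Rightarrow> ('a \<Rightarrow> 'a \<Rightarrow> 'a) \<Rightarrow> 'a \<Rightarrow> 'a set" where
  "component X opr x = conn X opr `` {x}"

definition triv_op :: "'c \<Rightarrow> 'c \<Rightarrow> 'c" where
  "triv_op a b = a"

text \<open>Words in the free group on X: letters (x, True) stand for x, (x, False) for x^-1.
  The relation below is the congruence on words generated by free cancellation and the
  defining relations y^-1 x y = x^y; the structure group is the quotient.\<close>

inductive_set wrel :: "'a set \<Rightarrow> ('a \<Rightarrow> 'a \<Rightarrow> 'a) \<Rightarrow> (('a \<times> bool) list \<times> ('a \<times> bool) list) set"
  for X opr where
  wrel_refl: "set (map fst w) \<subseteq> X \<Longrightarrow> (w, w) \<in> wrel X opr"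
| wrel_sym: "(u, v) \<in> wrel X opr \<Longrightarrow> (v, u) \<in> wrel X opr"
| wrel_trans: "(u, v) \<in> wrel X opr \<Longrightarrow> (v, w) \<in> wrel X opr \<Longrightarrow> (u, w) \<in> wrel X opr"
| wrel_cancel: "set (map fst u) \<subseteq> X \<Longrightarrow> set (map fst v) \<subseteq> X \<Longrightarrow> x \<in> X \<Longrightarrow>
      (u @ [(x, b), (x, \<not> b)] @ v, u @ v) \<in> wrel X opr"
| wrel_rack: "set (map fst u) \<subseteq> X \<Longrightarrow> set (map fst v) \<subseteq> X \<Longrightarrow> x \<in> X \<Longrightarrow> y \<in> X \<Longrightarrow>
      (u @ [(y, False), (x, True), (y, True)] @ v, u @ [(opr x y, True)] @ v) \<in> wrel X opr"

definition words :: "'a set \<Rightarrow> ('a \<times> bool) list set" where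
  "words X = {w. set (map fst w) \<subseteq> X}"

definition structure_group :: "'a set \<Rightarrow> ('a \<Rightarrow> 'a \<Rightarrow> 'a) \<Rightarrow> ('a \<times> bool) list set monoid" where
  "structure_group X opr =
     \<lparr> carrier = words X // wrel X opr,
       mult = (\<lambda>A B. \<Union>a\<in>A. \<Union>b\<in>B. wrel X opr `` {a @ b}),
       one = wrel X opr `` {[]} \<rparr>"

definition induced_hom :: "'b set \<Rightarrow> ('b \<Rightarrow> 'b \<Rightarrow> 'b) \<Rightarrow> ('a \<Rightarrow> 'b)
    \<Rightarrow> ('a \<times> bool) list set \<Rightarrow> ('b \<times> bool) list set" where
  "induced_hom X' opr' f A = wrel X' opr' `` ((map (\<lambda>(x, b). (f x, b))) ` A)"

definition productive :: "'a set \<Rightarrow> ('a \<Rightarrow> 'a \<Rightarrow> 'a) \<Rightarrow> 'b set \<Rightarrow> ('b \<Rightarrow> 'b \<Rightarrow> 'b) \<Rightarrow> bool" where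
  "productive X opX Y opY \<longleftrightarrow>
     (let G = structure_group (X \<times> Y) (prod_op opX opY) in
      inj_on (\<lambda>A. (induced_hom X opX fst A, induced_hom Y opY snd A))
             (derived G (carrier G)))"

definition triv_prod_map :: "'a set \<Rightarrow> ('a \<Rightarrow> 'a \<Rightarrow> 'a) \<Rightarrow> 'b set \<Rightarrow> ('b \<Rightarrow> 'b \<Rightarrow> 'b)
    \<Rightarrow> ('a \<times> 'b) set \<Rightarrow> 'a set \<times> 'b set" where
  "triv_prod_map X opX Y opY C = the_elem ((\<lambda>p. (component X opX (fst p), component Y opY (snd p))) ` C)"

definition synchronized :: "'a set \<Rightarrow> ('a \<Rightarrow> 'a \<Rightarrow> 'a) \<Rightarrow> 'b set \<Rightarrow> ('b \<Rightarrow> 'b \<Rightarrow> 'b) \<Rightarrow> bool" where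
  "synchronized X opX Y opY \<longleftrightarrow>
     bij_betw (triv_prod_map X opX Y opY)
       (triv_set (X \<times> Y) (prod_op opX opY))
       (triv_set X opX \<times> triv_set Y opY)"

end

(*
  Every homomorphism from the structure group of a rack into an abelian group sends a
  generator and all its conjugates, hence all generators in one connected component, to the
  same element. For X x Y synchronization identifies the components with pairs of components
  of X and Y, so the abelianization of Gamma_(X x Y) factors through Gamma_(X_triv x Y_triv).
  Thus the kernel of the third map lies in the commutator subgroup, where productivity makes
  the first two maps jointly injective.
*)

theory Submission
  imports Defs
begin

definition closed_op :: "'a set \<Rightarrow> ('a \<Rightarrow> 'a \<Rightarrow> 'a) \<Rightarrow> bool" where
  "closed_op X opr \<longleftrightarrow> (\<forall>x\<in>X. \<forall>y\<in>X. opr x y \<in> X)"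

definition rack_morphism ::
    "'a set \<Rightarrow> ('a \<Rightarrow> 'a \<Rightarrow> 'a) \<Rightarrow> 'b set \<Rightarrow> ('b \<Rightarrow> 'b \<Rightarrow> 'b) \<Rightarrow> ('a \<Rightarrow> 'b) \<Rightarrow> bool" where
  "rack_morphism X opr X' opr' f \<longleftrightarrow>
     f ` X \<subseteq> X' \<and> (\<forall>x\<in>X. \<forall>y\<in>X. f (opr x y) = opr' (f x) (f y))"

definition conj_op :: "('g, 'm) monoid_scheme \<Rightarrow> 'g \<Rightarrow> 'g \<Rightarrow> 'g" where
  "conj_op G a b = inv\<^bsub>G\<^esub> b \<otimes>\<^bsub>G\<^esub> a \<otimes>\<^bsub>G\<^esub> b"

lemma rack_imp_closed_op: "rack X opr \<Longrightarrow> closed_op X opr"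
  by (simp add: rack_def closed_op_def)

lemma rack_morphism_comp:
  "rack_morphism X opr Y opY f \<Longrightarrow> rack_morphism Y opY Z opZ g \<Longrightarrow> rack_morphism X opr Z opZ (g \<circ> f)"
  by (auto simp: rack_morphism_def image_subset_iff)

section \<open>Words and the structure group\<close>

abbreviation map_word :: "('a \<Rightarrow> 'b) \<Rightarrow> ('a \<times> bool) list \<Rightarrow> ('b \<times> bool) list" where
  "map_word f \<equiv> map (\<lambda>(x, b). (f x, b))"

lemma Nil_in_words [simp]: "[] \<in> words X"
  by (simp add: words_def)

lemma Cons_in_words [simp]: "(x, b) # w \<in> words X \<longleftrightarrow> x \<in> X \<and> w \<in> words X"
  by (simp add: words_def)

lemma append_in_words [simp]: "u @ v \<in> words X \<longleftrightarrow> u \<in> words X \<and> v \<in> words X"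
  by (auto simp: words_def)

lemma map_word_in_words: "w \<in> words X \<Longrightarrow> f ` X \<subseteq> X' \<Longrightarrow> map_word f w \<in> words X'"
  by (force simp: words_def)

lemma wrel_in_words:
  "(u, v) \<in> wrel X opr \<Longrightarrow> closed_op X opr \<Longrightarrow> u \<in> words X \<and> v \<in> words X"
  by (induction rule: wrel.induct) (auto simp: words_def closed_op_def)

lemma wrel_reflI: "w \<in> words X \<Longrightarrow> (w, w) \<in> wrel X opr"
  by (rule wrel_refl) (simp add: words_def)

lemma wrel_class_eq: "(u, v) \<in> wrel X opr \<Longrightarrow> wrel X opr `` {u} = wrel X opr `` {v}"
  using wrel.wrel_sym wrel.wrel_trans by blast

lemma wrel_in_context:
  assumes "(u, v) \<in> wrel X opr" "s \<in> words X" "t \<in> words X"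
  shows "(s @ u @ t, s @ v @ t) \<in> wrel X opr"
  using assms
proof (induction arbitrary: s t rule: wrel.induct)
  case (wrel_refl w)
  then show ?case by (intro wrel.wrel_refl) (auto simp: words_def)
next
  case (wrel_sym u v)
  then show ?case by (blast intro: wrel.wrel_sym)
next
  case (wrel_trans u v w)
  then show ?case by (blast intro: wrel.wrel_trans)
next
  case (wrel_cancel u v x b)
  have "((s @ u) @ [(x, b), (x, \<not> b)] @ (v @ t), (s @ u) @ (v @ t)) \<in> wrel X opr"
    using wrel_cancel by (intro wrel.wrel_cancel) (auto simp: words_def)
  then show ?case by simp
next
  case (wrel_rack u v x y)
  have "((s @ u) @ [(y, False), (x, True), (y, True)] @ (v @ t),
         (s @ u) @ [(opr x y, True)] @ (v @ t)) \<in> wrel X opr"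
    using wrel_rack by (intro wrel.wrel_rack) (auto simp: words_def)
  then show ?case by simp
qed

lemma wrel_append:
  assumes "closed_op X opr" "(u, u') \<in> wrel X opr" "(v, v') \<in> wrel X opr"
  shows "(u @ v, u' @ v') \<in> wrel X opr"
proof -
  have "(u @ v, u' @ v) \<in> wrel X opr"
    using wrel_in_context[OF assms(2), of "[]" v] wrel_in_words[OF assms(3,1)] by simp
  moreover have "(u' @ v, u' @ v') \<in> wrel X opr"
    using wrel_in_context[OF assms(3), of u' "[]"] wrel_in_words[OF assms(2,1)] by simp
  ultimately show ?thesis by (blast intro: wrel.wrel_trans)
qed

lemma carrier_structure_group: "carrier (structure_group X opr) = words X // wrel X opr"
  by (simp add: structure_group_def)

lemma one_structure_group: "\<one>\<^bsub>structure_group X opr\<^esub> = wrel X opr `` {[]}"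
  by (simp add: structure_group_def)

lemma class_in_carrier: "w \<in> words X \<Longrightarrow> wrel X opr `` {w} \<in> carrier (structure_group X opr)"
  by (simp add: carrier_structure_group quotientI)

lemma carrier_structure_groupE:
  assumes "A \<in> carrier (structure_group X opr)"
  obtains w where "w \<in> words X" "A = wrel X opr `` {w}"
  using assms by (auto simp: carrier_structure_group elim!: quotientE)

lemma mult_structure_group:
  assumes closed: "closed_op X opr" and "u \<in> words X" "v \<in> words X"
  shows "wrel X opr `` {u} \<otimes>\<^bsub>structure_group X opr\<^esub> wrel X opr `` {v} = wrel X opr `` {u @ v}"
proof -
  let ?R = "wrel X opr"
  have "?R `` {u' @ v'} = ?R `` {u @ v}" if "u' \<in> ?R `` {u}" "v' \<in> ?R `` {v}" for u' v'
    using that by (intro wrel_class_eq wrel_append[OF closed]) (auto intro: wrel.wrel_sym)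
  moreover have "u \<in> ?R `` {u}" "v \<in> ?R `` {v}"
    using assms wrel_reflI by auto
  ultimately have "(\<Union>u'\<in>?R `` {u}. \<Union>v'\<in>?R `` {v}. ?R `` {u' @ v'}) = ?R `` {u @ v}"
    by blast
  then show ?thesis
    by (simp add: structure_group_def)
qed

definition word_inv :: "('a \<times> bool) list \<Rightarrow> ('a \<times> bool) list" where
  "word_inv w = rev (map (\<lambda>(x, b). (x, \<not> b)) w)"

lemma word_inv_in_words: "w \<in> words X \<Longrightarrow> word_inv w \<in> words X"
  by (auto simp: word_inv_def words_def)

lemma word_inv_cancel: "w \<in> words X \<Longrightarrow> (word_inv w @ w, []) \<in> wrel X opr"
proof (induction w)
  case Nil
  then show ?case by (simp add: word_inv_def wrel_reflI)
next
  case (Cons a w)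
  obtain x b where a: "a = (x, b)" by (cases a)
  have w: "w \<in> words X" "x \<in> X" using Cons.prems a by auto
  have "(word_inv w @ [(x, \<not> b), (x, \<not> \<not> b)] @ w, word_inv w @ w) \<in> wrel X opr"
    using w word_inv_in_words[OF w(1)] by (intro wrel.wrel_cancel) (auto simp: words_def)
  then have "(word_inv (a # w) @ a # w, word_inv w @ w) \<in> wrel X opr"
    by (simp add: a word_inv_def)
  then show ?case using Cons.IH[OF w(1)] by (blast intro: wrel.wrel_trans)
qed

lemma group_structure_group:
  assumes closed: "closed_op X opr"
  shows "group (structure_group X opr)"
proof (rule groupI)
  let ?G = "structure_group X opr"
  let ?R = "wrel X opr"
  note mult = mult_structure_group[OF closed]
  show "\<one>\<^bsub>?G\<^esub> \<in> carrier ?G"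
    by (simp add: one_structure_group class_in_carrier)
  fix A assume "A \<in> carrier ?G"
  then obtain u where u: "u \<in> words X" "A = ?R `` {u}"
    by (rule carrier_structure_groupE)
  show "\<one>\<^bsub>?G\<^esub> \<otimes>\<^bsub>?G\<^esub> A = A"
    using u by (simp add: mult one_structure_group)
  show "\<exists>B\<in>carrier ?G. B \<otimes>\<^bsub>?G\<^esub> A = \<one>\<^bsub>?G\<^esub>"
  proof
    show "?R `` {word_inv u} \<in> carrier ?G"
      using u word_inv_in_words class_in_carrier by blast
    show "?R `` {word_inv u} \<otimes>\<^bsub>?G\<^esub> A = \<one>\<^bsub>?G\<^esub>"
      using u word_inv_in_words[OF u(1)] word_inv_cancel[OF u(1)]
      by (simp add: mult one_structure_group wrel_class_eq)
  qed
  fix B assume "B \<in> carrier ?G"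
  then obtain v where v: "v \<in> words X" "B = ?R `` {v}"
    by (rule carrier_structure_groupE)
  show "A \<otimes>\<^bsub>?G\<^esub> B \<in> carrier ?G"
    using u v by (simp add: mult class_in_carrier)
  fix C assume "C \<in> carrier ?G"
  then obtain w where w: "w \<in> words X" "C = ?R `` {w}"
    by (rule carrier_structure_groupE)
  show "A \<otimes>\<^bsub>?G\<^esub> B \<otimes>\<^bsub>?G\<^esub> C = A \<otimes>\<^bsub>?G\<^esub> (B \<otimes>\<^bsub>?G\<^esub> C)"
    using u v w by (simp add: mult)
qed

lemma wrel_map_word:
  assumes "(u, v) \<in> wrel X opr" and f: "rack_morphism X opr X' opr' f"
  shows "(map_word f u, map_word f v) \<in> wrel X' opr'"
proof -
  have maps: "set (map fst (map_word f w)) \<subseteq> X'" if "set (map fst w) \<subseteq> X" for w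
    using that f by (auto simp: rack_morphism_def image_subset_iff)
  have X': "f x \<in> X'" if "x \<in> X" for x
    using that f by (auto simp: rack_morphism_def)
  from assms(1) show ?thesis
  proof (induction rule: wrel.induct)
    case (wrel_refl w)
    then show ?case by (intro wrel.wrel_refl maps)
  next
    case (wrel_sym u v)
    then show ?case by (blast intro: wrel.wrel_sym)
  next
    case (wrel_trans u v w)
    then show ?case by (blast intro: wrel.wrel_trans)
  next
    case (wrel_cancel u v x b)
    have "(map_word f u @ [(f x, b), (f x, \<not> b)] @ map_word f v, map_word f u @ map_word f v)
        \<in> wrel X' opr'"
      using wrel_cancel by (intro wrel.wrel_cancel maps X')
    then show ?case by simp
  next
    case (wrel_rack u v x y)
    have "(map_word f u @ [(f y, False), (f x, True), (f y, True)] @ map_word f v,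
           map_word f u @ [(opr' (f x) (f y), True)] @ map_word f v) \<in> wrel X' opr'"
      using wrel_rack by (intro wrel.wrel_rack maps X')
    moreover have "f (opr x y) = opr' (f x) (f y)"
      using wrel_rack f by (simp add: rack_morphism_def)
    ultimately show ?case by simp
  qed
qed

lemma induced_hom_class:
  assumes "w \<in> words X" "rack_morphism X opr X' opr' f"
  shows "induced_hom X' opr' f (wrel X opr `` {w}) = wrel X' opr' `` {map_word f w}"
proof -
  have "wrel X' opr' `` {map_word f w'} = wrel X' opr' `` {map_word f w}"
    if "w' \<in> wrel X opr `` {w}" for w'
    using that by (intro wrel_class_eq wrel_map_word[OF _ assms(2)]) (auto intro: wrel.wrel_sym)
  moreover have "w \<in> wrel X opr `` {w}" using assms(1) wrel_reflI by auto
  ultimately show ?thesis unfolding induced_hom_def by blast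
qed

lemma induced_hom_hom:
  assumes "closed_op X opr" "closed_op X' opr'" and f: "rack_morphism X opr X' opr' f"
  shows "induced_hom X' opr' f \<in> hom (structure_group X opr) (structure_group X' opr')"
proof (rule homI)
  have words: "map_word f w \<in> words X'" if "w \<in> words X" for w
    using that f by (simp add: map_word_in_words rack_morphism_def)
  fix A assume "A \<in> carrier (structure_group X opr)"
  then show "induced_hom X' opr' f A \<in> carrier (structure_group X' opr')"
    by (auto elim!: carrier_structure_groupE simp: induced_hom_class[OF _ f] words class_in_carrier)
  fix B assume "B \<in> carrier (structure_group X opr)"
  with \<open>A \<in> carrier (structure_group X opr)\<close>
  show "induced_hom X' opr' f (A \<otimes>\<^bsub>structure_group X opr\<^esub> B) =
    induced_hom X' opr' f A \<otimes>\<^bsub>structure_group X' opr'\<^esub> induced_hom X' opr' f B"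
    by (auto elim!: carrier_structure_groupE
        simp: mult_structure_group assms induced_hom_class[OF _ f] words)
qed

section \<open>Evaluating words in a group\<close>

fun word_eval :: "('g, 'm) monoid_scheme \<Rightarrow> ('a \<Rightarrow> 'g) \<Rightarrow> ('a \<times> bool) list \<Rightarrow> 'g" where
  "word_eval K f [] = \<one>\<^bsub>K\<^esub>"
| "word_eval K f ((x, b) # w) = (if b then f x else inv\<^bsub>K\<^esub> (f x)) \<otimes>\<^bsub>K\<^esub> word_eval K f w"

lemma word_eval_map_word: "word_eval K f (map_word g w) = word_eval K (f \<circ> g) w"
  by (induction w) auto

lemma word_eval_cong:
  "w \<in> words X \<Longrightarrow> (\<And>x. x \<in> X \<Longrightarrow> f x = f' x) \<Longrightarrow> word_eval K f w = word_eval K f' w"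
  by (induction K f w rule: word_eval.induct) auto

context group
begin

lemma word_eval_closed: "f ` X \<subseteq> carrier G \<Longrightarrow> w \<in> words X \<Longrightarrow> word_eval G f w \<in> carrier G"
proof (induction w)
  case (Cons a w)
  then show ?case by (cases a) auto
qed simp

lemma word_eval_append:
  assumes "f ` X \<subseteq> carrier G" "u \<in> words X" "word_eval G f v \<in> carrier G"
  shows "word_eval G f (u @ v) = word_eval G f u \<otimes> word_eval G f v"
  using assms(2)
proof (induction u)
  case (Cons a u)
  obtain x b where a: "a = (x, b)" by (cases a)
  have "f x \<in> carrier G" "word_eval G f u \<in> carrier G"
    using Cons.prems assms a by (auto intro: word_eval_closed)
  then show ?case using Cons a assms(3) by (simp add: m_assoc)
qed (simp add: assms(3))

lemma word_eval_wrel: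
  assumes f: "rack_morphism X opr (carrier G) (conj_op G) f" and "(u, v) \<in> wrel X opr"
  shows "word_eval G f u = word_eval G f v"
proof -
  have closed: "f ` X \<subseteq> carrier G" using f by (simp add: rack_morphism_def)
  have evals_closed: "f x \<in> carrier G" "word_eval G f w \<in> carrier G"
    if "x \<in> X" "set (map fst w) \<subseteq> X" for x w
    using that closed by (auto simp: words_def intro!: word_eval_closed[OF closed])
  from assms(2) show ?thesis
  proof (induction rule: wrel.induct)
    case (wrel_cancel u v x b)
    then have "word_eval G f ([(x, b), (x, \<not> b)] @ v) = word_eval G f v"
      using evals_closed by (simp flip: m_assoc)
    then show ?case
      using wrel_cancel evals_closed
      by (simp add: word_eval_append[OF closed] words_def del: word_eval.simps)
  next
    case (wrel_rack u v x y)
    then have "word_eval G f ([(y, False), (x, True), (y, True)] @ v) =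
        word_eval G f ([(opr x y, True)] @ v)"
      using f evals_closed by (simp add: rack_morphism_def conj_op_def m_assoc)
    moreover have "word_eval G f ([(y, False), (x, True), (y, True)] @ v) \<in> carrier G"
      using wrel_rack evals_closed by simp
    ultimately show ?case
      using wrel_rack evals_closed
      by (simp add: word_eval_append[OF closed] words_def del: word_eval.simps)
  qed auto
qed

end

lemma (in group_hom) hom_word_eval:
  "f ` X \<subseteq> carrier G \<Longrightarrow> w \<in> words X \<Longrightarrow> h (word_eval G f w) = word_eval H (h \<circ> f) w"
proof (induction w)
  case (Cons a w)
  obtain x b where a: "a = (x, b)" by (cases a)
  have "f x \<in> carrier G" "word_eval G f w \<in> carrier G"
    using Cons.prems a by (auto intro: G.word_eval_closed)
  then show ?case using Cons a by simp
qed simp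

lemma (in group_hom) rack_morphism_conj_op:
  "rack_morphism (carrier G) (conj_op G) (carrier H) (conj_op H) h"
  by (auto simp: rack_morphism_def conj_op_def)

lemma (in comm_group) conj_op_eq: "a \<in> carrier G \<Longrightarrow> b \<in> carrier G \<Longrightarrow> conj_op G a b = a"
  by (simp add: conj_op_def m_comm[of "inv b" a] m_assoc)

lemma (in comm_group) rack_morphism_triv_op:
  assumes "f ` X \<subseteq> carrier G"
  shows "rack_morphism X triv_op (carrier G) (conj_op G) f"
  using assms by (simp add: rack_morphism_def triv_op_def image_subset_iff conj_op_eq)

definition generator :: "'a set \<Rightarrow> ('a \<Rightarrow> 'a \<Rightarrow> 'a) \<Rightarrow> 'a \<Rightarrow> ('a \<times> bool) list set" where
  "generator X opr x = wrel X opr `` {[(x, True)]}"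

lemma generator_in_carrier: "x \<in> X \<Longrightarrow> generator X opr x \<in> carrier (structure_group X opr)"
  by (simp add: generator_def class_in_carrier)

lemma class_eq_word_eval:
  assumes closed: "closed_op X opr"
  shows "w \<in> words X \<Longrightarrow> wrel X opr `` {w} = word_eval (structure_group X opr) (generator X opr) w"
proof (induction w)
  case Nil
  then show ?case by (simp add: one_structure_group)
next
  case (Cons a w)
  interpret group "structure_group X opr" by (rule group_structure_group[OF closed])
  obtain x b where a: "a = (x, b)" by (cases a)
  have x: "x \<in> X" and w: "w \<in> words X" using Cons.prems a by auto
  have "wrel X opr `` {[(x, False)]} \<otimes>\<^bsub>structure_group X opr\<^esub> generator X opr x
      = \<one>\<^bsub>structure_group X opr\<^esub>"
    using x wrel.wrel_cancel[of "[]" X "[]" x False opr]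
    by (simp add: generator_def mult_structure_group[OF closed] one_structure_group wrel_class_eq)
  then have "wrel X opr `` {[(x, False)]} = inv\<^bsub>structure_group X opr\<^esub> generator X opr x"
    using x by (intro inv_equality[symmetric]) (auto simp: generator_in_carrier class_in_carrier)
  then have "wrel X opr `` {[(x, b)]} =
      (if b then generator X opr x else inv\<^bsub>structure_group X opr\<^esub> generator X opr x)"
    by (simp add: generator_def)
  then show ?case
    using Cons.IH[OF w] mult_structure_group[OF closed, of "[(x, b)]" w] x w a by simp
qed

lemma rack_morphism_generator:
  assumes closed: "closed_op X opr"
  shows "rack_morphism X opr (carrier (structure_group X opr)) (conj_op (structure_group X opr))
           (generator X opr)"
  unfolding rack_morphism_def
proof (intro conjI ballI image_subsetI)
  interpret group "structure_group X opr" by (rule group_structure_group[OF closed])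
  fix x y assume xy: "x \<in> X" "y \<in> X"
  have "([] @ [(y, False), (x, True), (y, True)] @ [], [] @ [(opr x y, True)] @ []) \<in> wrel X opr"
    using xy by (intro wrel.wrel_rack) auto
  then have "generator X opr (opr x y) = wrel X opr `` {[(y, False), (x, True), (y, True)]}"
    by (simp add: generator_def wrel_class_eq)
  also have "\<dots> = conj_op (structure_group X opr) (generator X opr x) (generator X opr y)"
    using xy by (simp add: class_eq_word_eval[OF closed] conj_op_def m_assoc generator_in_carrier)
  finally show "generator X opr (opr x y) =
      conj_op (structure_group X opr) (generator X opr x) (generator X opr y)" .
qed (rule generator_in_carrier)

section \<open>Connected components\<close>

lemma (in comm_group) rack_morphism_conn_eq:
  assumes f: "rack_morphism X opr (carrier G) (conj_op G) f"
  shows "(p, q) \<in> conn X opr \<Longrightarrow> f p = f q"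
proof (induction rule: conn.induct)
  case (conn_step x y)
  then have "f x \<in> carrier G" "f y \<in> carrier G" using f by (auto simp: rack_morphism_def)
  with conn_step f show ?case by (simp add: rack_morphism_def conj_op_eq)
qed auto

lemma conn_map:
  assumes f: "rack_morphism X opr X' opr' f"
  shows "(p, q) \<in> conn X opr \<Longrightarrow> (f p, f q) \<in> conn X' opr'"
proof (induction rule: conn.induct)
  case (conn_refl x)
  with f show ?case by (auto simp: rack_morphism_def intro: conn.conn_refl)
next
  case (conn_step x y)
  with f show ?case by (auto simp: rack_morphism_def intro: conn.conn_step)
next
  case (conn_sym x y)
  show ?case by (rule conn.conn_sym[OF conn_sym.IH])
next
  case (conn_trans x y z)
  then show ?case by (blast intro: conn.conn_trans)
qed

lemma component_eqI:
  assumes "(p, q) \<in> conn X opr"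
  shows "component X opr p = component X opr q"
proof -
  have "(p, z) \<in> conn X opr \<longleftrightarrow> (q, z) \<in> conn X opr" for z
    using conn.conn_trans[OF assms] conn.conn_trans[OF conn.conn_sym[OF assms]] by blast
  then show ?thesis by (auto simp: component_def)
qed

lemma conn_if_component_eq:
  "q \<in> X \<Longrightarrow> component X opr p = component X opr q \<Longrightarrow> (p, q) \<in> conn X opr"
  unfolding component_def by (metis Image_singleton_iff conn.conn_refl)

lemma rack_morphism_component:
  "rack_morphism X opr (triv_set X opr) triv_op (component X opr)"
  unfolding rack_morphism_def
proof (intro conjI ballI image_subsetI)
  fix x y assume "x \<in> X" "y \<in> X"
  then show "component X opr (opr x y) = triv_op (component X opr x) (component X opr y)"
    by (simp add: triv_op_def component_eqI[symmetric] conn.conn_step)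
qed (simp add: triv_set_def component_def quotientI)

section \<open>Homomorphisms into abelian groups\<close>

text \<open>The hypotheses on g identify T with the set of connected components of Z.\<close>

lemma (in comm_group) rack_morphism_factor_through_components:
  assumes e: "rack_morphism Z opr (carrier G) (conj_op G) e"
    and g: "rack_morphism Z opr T triv_op g" "T \<subseteq> g ` Z"
    and fibres_connected: "\<And>p q. p \<in> Z \<Longrightarrow> q \<in> Z \<Longrightarrow> g p = g q \<Longrightarrow> (p, q) \<in> conn Z opr"
  obtains t where "rack_morphism T triv_op (carrier G) (conj_op G) t" "\<And>z. z \<in> Z \<Longrightarrow> t (g z) = e z"
proof
  let ?t = "e \<circ> inv_into Z g"
  show t_g: "?t (g z) = e z" if "z \<in> Z" for z
  proof -
    have "inv_into Z g (g z) \<in> Z" "g (inv_into Z g (g z)) = g z"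
      using that by (auto intro: inv_into_into f_inv_into_f)
    with that show ?thesis
      using rack_morphism_conn_eq[OF e fibres_connected, of "inv_into Z g (g z)" z] by simp
  qed
  show "rack_morphism T triv_op (carrier G) (conj_op G) ?t"
  proof (intro rack_morphism_triv_op image_subsetI)
    fix s assume "s \<in> T"
    then obtain z where "z \<in> Z" "s = g z" using g(2) by blast
    then show "?t s \<in> carrier G" using e t_g by (auto simp: rack_morphism_def)
  qed
qed

lemma kernel_induced_hom_triv_subset_kernel:
  assumes closed: "closed_op Z opr"
    and g: "rack_morphism Z opr T triv_op g" "T \<subseteq> g ` Z"
    and fibres_connected: "\<And>p q. p \<in> Z \<Longrightarrow> q \<in> Z \<Longrightarrow> g p = g q \<Longrightarrow> (p, q) \<in> conn Z opr"
    and "comm_group K" and \<phi>: "\<phi> \<in> hom (structure_group Z opr) K"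
  shows "kernel (structure_group Z opr) (structure_group T triv_op) (induced_hom T triv_op g)
           \<subseteq> kernel (structure_group Z opr) K \<phi>"
proof
  let ?G = "structure_group Z opr"
  interpret K: comm_group K by fact
  interpret \<phi>: group_hom ?G K \<phi>
    using \<phi> group_structure_group[OF closed]
    by (simp add: group_hom_def group_hom_axioms_def K.group_axioms)
  define e where "e = \<phi> \<circ> generator Z opr"
  have e: "rack_morphism Z opr (carrier K) (conj_op K) e"
    unfolding e_def
    using rack_morphism_generator[OF closed] \<phi>.rack_morphism_conj_op by (rule rack_morphism_comp)
  obtain t where t: "rack_morphism T triv_op (carrier K) (conj_op K) t"
    and t_g: "\<And>z. z \<in> Z \<Longrightarrow> t (g z) = e z"
    using K.rack_morphism_factor_through_components[OF e g fibres_connected] by blast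
  fix C assume C: "C \<in> kernel ?G (structure_group T triv_op) (induced_hom T triv_op g)"
  then obtain w where w: "w \<in> words Z" "C = wrel Z opr `` {w}"
    by (auto simp: kernel_def elim: carrier_structure_groupE)
  have gw: "map_word g w \<in> words T"
    using w g by (simp add: map_word_in_words rack_morphism_def)
  have "wrel T triv_op `` {map_word g w} = wrel T triv_op `` {[]}"
    using C w g by (simp add: kernel_def induced_hom_class one_structure_group)
  then have rel: "(map_word g w, []) \<in> wrel T triv_op"
    using wrel_reflI[OF gw] by (blast intro: wrel.wrel_sym)
  have gen: "generator Z opr ` Z \<subseteq> carrier ?G"
    using rack_morphism_generator[OF closed] by (simp add: rack_morphism_def)
  have "\<phi> C = \<phi> (word_eval ?G (generator Z opr) w)"
    using w class_eq_word_eval[OF closed] by simp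
  also have "\<dots> = word_eval K e w"
    unfolding e_def using gen w(1) by (rule \<phi>.hom_word_eval)
  also have "\<dots> = word_eval K (t \<circ> g) w"
    by (rule word_eval_cong[OF w(1)]) (simp add: t_g)
  also have "\<dots> = word_eval K t (map_word g w)"
    by (rule word_eval_map_word[symmetric])
  also have "\<dots> = word_eval K t []"
    by (rule K.word_eval_wrel[OF t rel])
  finally show "C \<in> kernel ?G K \<phi>"
    using w by (simp add: kernel_def class_in_carrier)
qed

lemma (in normal) kernel_r_coset_hom: "kernel G (G Mod H) (\<lambda>a. H #> a) = H"
proof
  show "kernel G (G Mod H) (\<lambda>a. H #> a) \<subseteq> H"
  proof
    fix a assume "a \<in> kernel G (G Mod H) (\<lambda>a. H #> a)"
    then have "H #> a = H" "a \<in> carrier G"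
      by (simp_all add: kernel_def FactGroup_def)
    then show "a \<in> H"
      using subgroup_axioms by (rule coset_join1)
  qed
  show "H \<subseteq> kernel G (G Mod H) (\<lambda>a. H #> a)"
    using rcos_const[OF is_group] by (auto simp: kernel_def FactGroup_def)
qed

lemma kernel_induced_hom_triv_subset_derived:
  assumes closed: "closed_op Z opr"
    and g: "rack_morphism Z opr T triv_op g" "T \<subseteq> g ` Z"
    and fibres_connected: "\<And>p q. p \<in> Z \<Longrightarrow> q \<in> Z \<Longrightarrow> g p = g q \<Longrightarrow> (p, q) \<in> conn Z opr"
  shows "kernel (structure_group Z opr) (structure_group T triv_op) (induced_hom T triv_op g)
           \<subseteq> derived (structure_group Z opr) (carrier (structure_group Z opr))"
proof -
  let ?G = "structure_group Z opr"
  let ?D = "derived ?G (carrier ?G)"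
  interpret G: group ?G by (rule group_structure_group[OF closed])
  interpret D: normal ?D ?G by (rule G.derived_self_is_normal)
  have "kernel ?G (structure_group T triv_op) (induced_hom T triv_op g)
      \<subseteq> kernel ?G (?G Mod ?D) (\<lambda>a. ?D #>\<^bsub>?G\<^esub> a)"
    using closed g fibres_connected G.derived_quot_is_comm_group D.r_coset_hom_Mod
    by (rule kernel_induced_hom_triv_subset_kernel)
  then show ?thesis by (simp add: D.kernel_r_coset_hom)
qed

lemma (in group) inj_on_triple_hom:
  assumes "f1 \<in> hom G H1" "f2 \<in> hom G H2" "f3 \<in> hom G H3" "group H1" "group H2" "group H3"
    and "subgroup N G" "kernel G H3 f3 \<subseteq> N" "inj_on (\<lambda>x. (f1 x, f2 x)) N"
  shows "inj_on (\<lambda>x. (f1 x, f2 x, f3 x)) (carrier G)"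
proof -
  interpret f: group_hom G "H1 \<times>\<times> H2 \<times>\<times> H3" "\<lambda>x. (f1 x, f2 x, f3 x)"
    using assms(1-6) by (simp add: group_hom_def group_hom_axioms_def hom_paired DirProd_group is_group)
  have one: "f1 \<one> = \<one>\<^bsub>H1\<^esub>" "f2 \<one> = \<one>\<^bsub>H2\<^esub>"
    using f.hom_one unfolding one_DirProd by (simp_all only: prod.inject)
  have "kernel G (H1 \<times>\<times> H2 \<times>\<times> H3) (\<lambda>x. (f1 x, f2 x, f3 x)) \<subseteq> {\<one>}"
  proof
    fix x assume x: "x \<in> kernel G (H1 \<times>\<times> H2 \<times>\<times> H3) (\<lambda>x. (f1 x, f2 x, f3 x))"
    then have "x \<in> N"
      using assms(8) by (auto simp: kernel_def)
    moreover have "(f1 x, f2 x) = (f1 \<one>, f2 \<one>)"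
      using x one by (simp add: kernel_def)
    ultimately show "x \<in> {\<one>}"
      using assms(9) subgroup.one_closed[OF assms(7)] by (auto dest: inj_onD)
  qed
  then show ?thesis
    using f.inj_iff_trivial_ker f.subgroup_kernel subgroup.one_closed by blast
qed

section \<open>Product racks\<close>

lemma closed_op_prod:
  "closed_op X opX \<Longrightarrow> closed_op Y opY \<Longrightarrow> closed_op (X \<times> Y) (prod_op opX opY)"
  by (auto simp: closed_op_def prod_op_def)

lemma rack_morphism_fst: "rack_morphism (X \<times> Y) (prod_op opX opY) X opX fst"
  by (auto simp: rack_morphism_def prod_op_def)

lemma rack_morphism_snd: "rack_morphism (X \<times> Y) (prod_op opX opY) Y opY snd"
  by (auto simp: rack_morphism_def prod_op_def)

lemma rack_morphism_components:
  "rack_morphism (X \<times> Y) (prod_op opX opY) (triv_set X opX \<times> triv_set Y opY) triv_op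
     (\<lambda>p. (component X opX (fst p), component Y opY (snd p)))"
  using rack_morphism_component[of X opX] rack_morphism_component[of Y opY]
  by (auto simp: rack_morphism_def prod_op_def triv_op_def)

lemma components_surj:
  "triv_set X opX \<times> triv_set Y opY \<subseteq> (\<lambda>p. (component X opX (fst p), component Y opY (snd p))) ` (X \<times> Y)"
proof
  fix c assume "c \<in> triv_set X opX \<times> triv_set Y opY"
  then obtain x y where "x \<in> X" "y \<in> Y" "c = (component X opX x, component Y opY y)"
    by (auto simp: triv_set_def component_def elim!: quotientE)
  then show "c \<in> (\<lambda>p. (component X opX (fst p), component Y opY (snd p))) ` (X \<times> Y)"
    by force
qed

lemma triv_prod_map_component:
  assumes p: "p \<in> X \<times> Y"
  shows "triv_prod_map X opX Y opY (component (X \<times> Y) (prod_op opX opY) p) =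
    (component X opX (fst p), component Y opY (snd p))"
proof -
  let ?g = "\<lambda>p. (component X opX (fst p), component Y opY (snd p))"
  have "?g q = ?g p" if "q \<in> component (X \<times> Y) (prod_op opX opY) p" for q
  proof -
    have "(p, q) \<in> conn (X \<times> Y) (prod_op opX opY)"
      using that by (simp add: component_def)
    then have "(fst p, fst q) \<in> conn X opX" "(snd p, snd q) \<in> conn Y opY"
      by (auto dest: conn_map[OF rack_morphism_fst] conn_map[OF rack_morphism_snd])
    then show ?thesis
      by (simp add: component_eqI)
  qed
  moreover have "p \<in> component (X \<times> Y) (prod_op opX opY) p"
    using p by (simp add: component_def conn.conn_refl)
  ultimately have "?g ` component (X \<times> Y) (prod_op opX opY) p = {?g p}"
    by blast
  then show ?thesis by (simp add: triv_prod_map_def)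
qed

lemma synchronized_fibres_connected:
  assumes sync: "synchronized X opX Y opY" and pq: "p \<in> X \<times> Y" "q \<in> X \<times> Y"
    and eq: "(component X opX (fst p), component Y opY (snd p)) =
             (component X opX (fst q), component Y opY (snd q))"
  shows "(p, q) \<in> conn (X \<times> Y) (prod_op opX opY)"
proof (rule conn_if_component_eq[OF pq(2)])
  show "component (X \<times> Y) (prod_op opX opY) p = component (X \<times> Y) (prod_op opX opY) q"
  proof (rule inj_onD)
    show "inj_on (triv_prod_map X opX Y opY) (triv_set (X \<times> Y) (prod_op opX opY))"
      using sync by (simp add: synchronized_def bij_betw_def)
    show "triv_prod_map X opX Y opY (component (X \<times> Y) (prod_op opX opY) p) =
        triv_prod_map X opX Y opY (component (X \<times> Y) (prod_op opX opY) q)"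
      using pq eq by (simp add: triv_prod_map_component)
  qed (use pq in \<open>auto simp: triv_set_def component_def intro: quotientI\<close>)
qed

theorem corollary4p29:
  fixes X :: "'a set" and opX :: "'a \<Rightarrow> 'a \<Rightarrow> 'a"
    and Y :: "'b set" and opY :: "'b \<Rightarrow> 'b \<Rightarrow> 'b"
  assumes "rack X opX" and "rack Y opY"
    and "productive X opX Y opY"
    and "synchronized X opX Y opY"
  shows "inj_on
           (\<lambda>A. (induced_hom X opX fst A,
                 induced_hom Y opY snd A,
                 induced_hom (triv_set X opX \<times> triv_set Y opY) triv_op
                   (\<lambda>p. (component X opX (fst p), component Y opY (snd p))) A))
           (carrier (structure_group (X \<times> Y) (prod_op opX opY)))"
proof -
  let ?G = "structure_group (X \<times> Y) (prod_op opX opY)"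
  let ?T = "triv_set X opX \<times> triv_set Y opY"
  let ?g = "\<lambda>p. (component X opX (fst p), component Y opY (snd p))"
  have closed_X: "closed_op X opX" and closed_Y: "closed_op Y opY"
    using assms(1,2) by (simp_all add: rack_imp_closed_op)
  have closed: "closed_op (X \<times> Y) (prod_op opX opY)"
    using closed_X closed_Y by (rule closed_op_prod)
  have closed_T: "closed_op ?T triv_op"
    by (simp add: closed_op_def triv_op_def)
  interpret G: group ?G
    using closed by (rule group_structure_group)
  have groups: "group (structure_group X opX)" "group (structure_group Y opY)"
    "group (structure_group ?T triv_op)"
    using closed_X closed_Y closed_T by (simp_all add: group_structure_group)
  have hom_X: "induced_hom X opX fst \<in> hom ?G (structure_group X opX)"
    using closed closed_X rack_morphism_fst by (rule induced_hom_hom)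
  have hom_Y: "induced_hom Y opY snd \<in> hom ?G (structure_group Y opY)"
    using closed closed_Y rack_morphism_snd by (rule induced_hom_hom)
  have hom_T: "induced_hom ?T triv_op ?g \<in> hom ?G (structure_group ?T triv_op)"
    using closed closed_T rack_morphism_components by (rule induced_hom_hom)
  have kernel_T: "kernel ?G (structure_group ?T triv_op) (induced_hom ?T triv_op ?g)
      \<subseteq> derived ?G (carrier ?G)"
    using closed rack_morphism_components components_surj synchronized_fibres_connected[OF assms(4)]
    by (rule kernel_induced_hom_triv_subset_derived)
  have inj_XY: "inj_on (\<lambda>A. (induced_hom X opX fst A, induced_hom Y opY snd A))
      (derived ?G (carrier ?G))"
    using assms(3) by (simp add: productive_def Let_def)
  show ?thesis
    using G.derived_is_subgroup[OF subset_refl]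
    by (rule G.inj_on_triple_hom[OF hom_X hom_Y hom_T groups _ kernel_T inj_XY])
qed

end
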